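(* Let $n\ge 2$ and $\varphi$ a linear functional with $\varphi(e_i)=a_i$, $0<a_1<\dots<a_n$. The number of $\varphi$-monotone paths on $\diamond^n$ is $\dfrac{2^{2n-1}-2}{3}$.
   Context: $\diamond^n=\mathrm{conv}\{\pm e_1,\dots,\pm e_n\}$. A monotone path is a sequence of vertices $-e_n=v_0,v_1,\dots,v_m=e_n$ of $\diamond^n$ such that each $[v_{j-1},v_j]$ is an edge of $\diamond^n$ (i.e. $v_{j-1}\ne -v_j$) and $\varphi(v_{j-1})<\varphi(v_j)$ for all $j$. *)

theory Defs
  imports Complex_Main
begin

text \<open>Points of R^n are modelled as functions nat => real; only the
coordinates 1..n matter. e i is the i-th standard basis vector.\<close>

definition unit_vec :: "nat \<Rightarrow> (nat \<Rightarrow> real)" where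
  "unit_vec i = (\<lambda>j. if j = i then 1 else 0)"

definition cross_vertices :: "nat \<Rightarrow> (nat \<Rightarrow> real) set" where
  "cross_vertices n = {unit_vec i | i. i \<in> {1..n}} \<union> {- unit_vec i | i. i \<in> {1..n}}"

definition lin_fun :: "nat \<Rightarrow> (nat \<Rightarrow> real) \<Rightarrow> (nat \<Rightarrow> real) \<Rightarrow> real" where
  "lin_fun n a x = (\<Sum>i=1..n. a i * x i)"

text \<open>Monotone paths: vertex sequences v_0 = -e_n, ..., v_m = e_n of the
cross-polytope, consecutive vertices forming an edge (not antipodal) and
phi strictly increasing along the path.\<close>
definition monotone_paths :: "nat \<Rightarrow> (nat \<Rightarrow> real) \<Rightarrow> (nat \<Rightarrow> real) list set" where
  "monotone_paths n a = {vs. vs \<noteq> [] \<and> set vs \<subseteq> cross_vertices n \<and>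
      hd vs = - unit_vec n \<and> last vs = unit_vec n \<and>
      (\<forall>j. 0 < j \<and> j < length vs \<longrightarrow>
          vs ! (j - 1) \<noteq> - (vs ! j) \<and>
          lin_fun n a (vs ! (j - 1)) < lin_fun n a (vs ! j))}"

end

theory Submission
  imports Defs
begin

text \<open>Encode the vertex \<open>\<plusminus>e\<^sub>k\<close> by the integer \<open>\<plusminus>k\<close>. Since \<open>0 < a\<^sub>1 < \<dots> < a\<^sub>n\<close>,
  \<open>\<phi>\<close> orders the vertices exactly as the integers are ordered, so a monotone path is a strictly
  increasing list of nonzero integers from \<open>-n\<close> to \<open>n\<close> with no two consecutive entries opposite.
  Let \<open>Q\<^sub>m = signed_chains m\<close> be the set of such lists with arbitrary ends and entries in \<open>{\<plusminus>1, \<dots>, \<plusminus>m}\<close>.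
  A list in \<open>Q\<^sub>m\<^sub>+\<^sub>1\<close> is a list in \<open>Q\<^sub>m\<close>, optionally preceded by \<open>-(m+1)\<close> and optionally
  followed by \<open>m+1\<close>; only the list \<open>[-(m+1), m+1]\<close> is excluded. Hence
  \<open>|Q\<^sub>m\<^sub>+\<^sub>1| = 4|Q\<^sub>m| - 1\<close> and \<open>3|Q\<^sub>m| = 2\<^sup>2\<^sup>m\<^sup>+\<^sup>1 + 1\<close>, and the monotone paths on
  \<open>\<diamond>\<^sup>m\<^sup>+\<^sup>1\<close> are the \<open>|Q\<^sub>m| - 1\<close> lists of this form using both ends with a nonempty middle.\<close>

lemma all_nth_pred_iff_successively:
  "(\<forall>j. 0 < j \<and> j < length xs \<longrightarrow> P (xs ! (j - 1)) (xs ! j)) \<longleftrightarrow> successively P xs"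
  unfolding successively_conv_nth by (metis Suc_pred diff_Suc_1 zero_less_Suc)

lemma sorted_wrt_less_if_successively:
  "successively (\<lambda>x y. x < y \<and> P x y) (xs :: 'a :: linorder list) \<Longrightarrow> sorted_wrt (<) xs"
  by (metis (mono_tags) successively_conv_sorted_wrt successively_mono transp_on_less)

lemma sorted_wrt_less_split_ends:
  fixes lo hi :: "'a :: linorder"
  assumes "sorted_wrt (<) xs" "lo < hi" "set xs \<subseteq> {lo..hi}"
  shows "xs = (if lo \<in> set xs then [lo] else []) @ filter (\<lambda>x. lo < x \<and> x < hi) xs @
    (if hi \<in> set xs then [hi] else [])"
  using assms
proof (induction xs)
  case (Cons x xs)
  then show ?case
    by (cases "x = lo"; cases "x = hi") (auto simp: less_le_not_le)
qed simp

definition nonzero_range :: "nat \<Rightarrow> int set" where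
  "nonzero_range m = {- int m..int m} - {0}"

definition signed_chains :: "nat \<Rightarrow> int list set" where
  "signed_chains m = {xs. set xs \<subseteq> nonzero_range m \<and> successively (\<lambda>x y. x < y \<and> x \<noteq> - y) xs}"

definition bracket :: "int \<Rightarrow> bool \<Rightarrow> bool \<Rightarrow> int list \<Rightarrow> int list" where
  "bracket M b c ys = (if b then [- M] else []) @ ys @ (if c then [M] else [])"

lemma finite_nonzero_range: "finite (nonzero_range m)"
  by (simp add: nonzero_range_def)

lemma nonzero_range_Suc: "nonzero_range (Suc m) = insert (- int (Suc m)) (insert (int (Suc m)) (nonzero_range m))"
  by (auto simp: nonzero_range_def)

lemma sorted_wrt_less_if_signed_chains: "xs \<in> signed_chains m \<Longrightarrow> sorted_wrt (<) xs"
  using sorted_wrt_less_if_successively[where P = "\<lambda>x y :: int. x \<noteq> - y"]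
  by (simp add: signed_chains_def)

lemma finite_signed_chains: "finite (signed_chains m)"
proof (rule finite_subset)
  show "signed_chains m \<subseteq> {xs. set xs \<subseteq> nonzero_range m \<and> distinct xs}"
    using sorted_wrt_less_if_signed_chains by (auto simp: signed_chains_def strict_sorted_iff)
qed (simp add: finite_subset_distinct finite_nonzero_range)

lemma Nil_in_signed_chains: "[] \<in> signed_chains m"
  by (simp add: signed_chains_def)

lemma signed_chains_0: "signed_chains 0 = {[]}"
  by (auto simp: signed_chains_def nonzero_range_def)

lemma bracket_in_signed_chains_iff:
  assumes "set ys \<subseteq> nonzero_range m"
  shows "bracket (int (Suc m)) b c ys \<in> signed_chains (Suc m) \<longleftrightarrow>
    ys \<in> signed_chains m \<and> \<not> (b \<and> c \<and> ys = [])"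
proof -
  have "- int m \<le> y \<and> y \<le> int m" if "y \<in> set ys" for y
    using assms that by (auto simp: nonzero_range_def)
  then have "ys \<noteq> [] \<Longrightarrow> - int m \<le> hd ys \<and> hd ys \<le> int m \<and> - int m \<le> last ys \<and> last ys \<le> int m"
    by auto
  then show ?thesis
    using assms by (auto simp: bracket_def signed_chains_def nonzero_range_Suc successively_append_iff)
qed

lemma signed_chains_SucE:
  assumes "xs \<in> signed_chains (Suc m)"
  defines "M \<equiv> int (Suc m)"
  obtains b c ys where "set ys \<subseteq> nonzero_range m" "xs = bracket M b c ys"
proof
  let ?ys = "filter (\<lambda>x. - M < x \<and> x < M) xs"
  have "set xs \<subseteq> {- M..M}"
    using assms by (auto simp: signed_chains_def nonzero_range_def)
  then show "xs = bracket M (- M \<in> set xs) (M \<in> set xs) ?ys"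
    unfolding bracket_def
    by (intro sorted_wrt_less_split_ends sorted_wrt_less_if_signed_chains[OF assms(1)]) (simp_all add: M_def)
  show "set ?ys \<subseteq> nonzero_range m"
    using assms by (auto simp: signed_chains_def nonzero_range_def M_def)
qed

lemma inj_on_bracket:
  "inj_on (\<lambda>(b, c, ys). bracket (int (Suc m)) b c ys) (UNIV \<times> UNIV \<times> {ys. set ys \<subseteq> nonzero_range m})"
proof (rule inj_on_inverseI)
  let ?M = "int (Suc m)"
  fix bcys :: "bool \<times> bool \<times> int list"
  assume "bcys \<in> UNIV \<times> UNIV \<times> {ys. set ys \<subseteq> nonzero_range m}"
  then show "(\<lambda>xs. (- ?M \<in> set xs, ?M \<in> set xs, filter (\<lambda>x. - ?M < x \<and> x < ?M) xs))
      ((\<lambda>(b, c, ys). bracket ?M b c ys) bcys) = bcys"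
    by (force simp: bracket_def nonzero_range_def intro: filter_True)
qed

lemma signed_chains_Suc:
  "signed_chains (Suc m) = (\<lambda>(b, c, ys). bracket (int (Suc m)) b c ys) `
    (UNIV \<times> UNIV \<times> signed_chains m - {(True, True, [])})"
proof (intro equalityI subsetI)
  fix xs assume xs: "xs \<in> signed_chains (Suc m)"
  then obtain b c ys where ys: "set ys \<subseteq> nonzero_range m" and xs_eq: "xs = bracket (int (Suc m)) b c ys"
    by (rule signed_chains_SucE)
  then have "(b, c, ys) \<in> UNIV \<times> UNIV \<times> signed_chains m - {(True, True, [])}"
    using xs bracket_in_signed_chains_iff[OF ys] by simp
  then show "xs \<in> (\<lambda>(b, c, ys). bracket (int (Suc m)) b c ys) `
      (UNIV \<times> UNIV \<times> signed_chains m - {(True, True, [])})"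
    unfolding xs_eq by (rule rev_image_eqI) simp
next
  fix xs assume "xs \<in> (\<lambda>(b, c, ys). bracket (int (Suc m)) b c ys) `
      (UNIV \<times> UNIV \<times> signed_chains m - {(True, True, [])})"
  then obtain b c ys where "ys \<in> signed_chains m" "\<not> (b \<and> c \<and> ys = [])"
    and "xs = bracket (int (Suc m)) b c ys"
    by auto
  then show "xs \<in> signed_chains (Suc m)"
    using bracket_in_signed_chains_iff[of ys m] by (simp add: signed_chains_def)
qed

lemma card_signed_chains_Suc: "card (signed_chains (Suc m)) = 4 * card (signed_chains m) - 1"
proof -
  have "inj_on (\<lambda>(b, c, ys). bracket (int (Suc m)) b c ys) (UNIV \<times> UNIV \<times> signed_chains m - {(True, True, [])})"
    by (rule inj_on_subset[OF inj_on_bracket]) (auto simp: signed_chains_def)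
  then have "card (signed_chains (Suc m)) = card (UNIV \<times> UNIV \<times> signed_chains m - {(True, True, [])})"
    by (simp add: signed_chains_Suc card_image)
  also have "\<dots> = 4 * card (signed_chains m) - 1"
    using Nil_in_signed_chains by (simp add: card_cartesian_product finite_signed_chains)
  finally show ?thesis .
qed

lemma card_signed_chains: "3 * card (signed_chains m) = 2 ^ (2 * m + 1) + 1"
proof (induction m)
  case 0
  then show ?case by (simp add: signed_chains_0)
next
  case (Suc m)
  have "card (signed_chains m) \<ge> 1"
    using Suc.IH by simp
  then show ?case
    using Suc.IH by (simp add: card_signed_chains_Suc)
qed

definition signed_paths :: "nat \<Rightarrow> int list set" where
  "signed_paths n = {xs \<in> signed_chains n. xs \<noteq> [] \<and> hd xs = - int n \<and> last xs = int n}"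

lemma signed_paths_Suc:
  "signed_paths (Suc m) = bracket (int (Suc m)) True True ` (signed_chains m - {[]})"
proof (intro equalityI subsetI)
  fix xs assume xs: "xs \<in> signed_paths (Suc m)"
  then have "xs \<in> signed_chains (Suc m)"
    by (simp add: signed_paths_def)
  then obtain b c ys where ys: "set ys \<subseteq> nonzero_range m" and xs_eq: "xs = bracket (int (Suc m)) b c ys"
    by (rule signed_chains_SucE)
  have "- int (Suc m) \<in> set xs" "int (Suc m) \<in> set xs"
    using xs hd_in_set[of xs] last_in_set[of xs] by (auto simp: signed_paths_def)
  then have "b" "c"
    using ys unfolding xs_eq by (auto simp: bracket_def nonzero_range_def split: if_splits)
  then show "xs \<in> bracket (int (Suc m)) True True ` (signed_chains m - {[]})"
    using xs bracket_in_signed_chains_iff[OF ys] unfolding xs_eq by (simp add: signed_paths_def)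
next
  fix xs assume "xs \<in> bracket (int (Suc m)) True True ` (signed_chains m - {[]})"
  then obtain ys where ys: "ys \<in> signed_chains m" "ys \<noteq> []"
    and xs_eq: "xs = bracket (int (Suc m)) True True ys"
    by auto
  then have "xs \<in> signed_chains (Suc m)"
    using bracket_in_signed_chains_iff[of ys m] by (simp add: signed_chains_def)
  then show "xs \<in> signed_paths (Suc m)"
    by (simp add: signed_paths_def xs_eq bracket_def)
qed

lemma card_signed_paths_Suc: "card (signed_paths (Suc m)) = card (signed_chains m) - 1"
proof -
  have "inj_on (bracket (int (Suc m)) True True) (signed_chains m - {[]})"
    using inj_on_subset[OF inj_on_bracket, of "{True} \<times> {True} \<times> (signed_chains m - {[]})"]
    by (auto simp: inj_on_def signed_chains_def)
  then show ?thesis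
    using Nil_in_signed_chains
    by (simp add: signed_paths_Suc card_image finite_signed_chains card_Diff_singleton)
qed

definition signed_unit_vec :: "int \<Rightarrow> nat \<Rightarrow> real" where
  "signed_unit_vec k = (if 0 < k then unit_vec (nat k) else - unit_vec (nat (- k)))"

lemma signed_unit_vec_apply:
  "k \<noteq> 0 \<Longrightarrow> signed_unit_vec k j = (if j = nat \<bar>k\<bar> then of_int (sgn k) else 0)"
  by (auto simp: signed_unit_vec_def unit_vec_def)

lemma inj_on_signed_unit_vec: "inj_on signed_unit_vec (- {0})"
proof (rule inj_onI)
  fix k l :: int
  assume "k \<in> - {0}" "l \<in> - {0}" and eq: "signed_unit_vec k = signed_unit_vec l"
  then have "k \<noteq> 0" "l \<noteq> 0"
    by auto
  have "of_int (sgn k) = (if nat \<bar>k\<bar> = nat \<bar>l\<bar> then of_int (sgn l) else (0 :: real))"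
    using fun_cong[OF eq, of "nat \<bar>k\<bar>"] \<open>k \<noteq> 0\<close> \<open>l \<noteq> 0\<close> by (simp add: signed_unit_vec_apply)
  then have "\<bar>k\<bar> = \<bar>l\<bar>" "sgn k = sgn l"
    using \<open>k \<noteq> 0\<close> by (auto simp: sgn_0_0 split: if_splits)
  then show "k = l"
    by (metis sgn_mult_abs)
qed

lemma signed_unit_vec_uminus: "k \<noteq> 0 \<Longrightarrow> signed_unit_vec (- k) = - signed_unit_vec k"
  by (auto simp: signed_unit_vec_def)

lemma cross_vertices_eq_image: "cross_vertices n = signed_unit_vec ` nonzero_range n"
proof (intro equalityI subsetI)
  fix v assume "v \<in> cross_vertices n"
  then obtain i where "i \<in> {1..n}" "v = signed_unit_vec (int i) \<or> v = signed_unit_vec (- int i)"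
    by (auto simp: cross_vertices_def signed_unit_vec_def)
  then show "v \<in> signed_unit_vec ` nonzero_range n"
    by (auto simp: nonzero_range_def)
next
  fix v assume "v \<in> signed_unit_vec ` nonzero_range n"
  then obtain k where "k \<in> nonzero_range n" "v = signed_unit_vec k"
    by blast
  then show "v \<in> cross_vertices n"
    by (cases "0 < k") (auto simp: cross_vertices_def signed_unit_vec_def nonzero_range_def)
qed

lemma lin_fun_signed_unit_vec:
  assumes "k \<in> nonzero_range n"
  shows "lin_fun n a (signed_unit_vec k) = of_int (sgn k) * a (nat \<bar>k\<bar>)"
proof -
  have "k \<noteq> 0" "nat \<bar>k\<bar> \<in> {1..n}"
    using assms by (auto simp: nonzero_range_def)
  then show ?thesis
    by (simp add: lin_fun_def signed_unit_vec_apply if_distrib[of "\<lambda>x. a _ * x"] sum.delta' cong: if_cong)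
qed

lemma strict_mono_on_signed_weight:
  fixes a :: "nat \<Rightarrow> real"
  assumes mono: "strict_mono_on {1..n} a" and pos: "\<And>i. i \<in> {1..n} \<Longrightarrow> 0 < a i"
  shows "strict_mono_on (nonzero_range n) (\<lambda>k. of_int (sgn k) * a (nat \<bar>k\<bar>))"
proof (rule strict_mono_onI)
  fix k l assume "k \<in> nonzero_range n" "l \<in> nonzero_range n" "k < l"
  then have k: "nat \<bar>k\<bar> \<in> {1..n}" "k \<noteq> 0" and l: "nat \<bar>l\<bar> \<in> {1..n}" "l \<noteq> 0"
    by (auto simp: nonzero_range_def)
  consider "0 < k" | "k < 0" "0 < l" | "l < 0"
    using \<open>k < l\<close> k(2) l(2) by force
  then show "of_int (sgn k) * a (nat \<bar>k\<bar>) < of_int (sgn l) * a (nat \<bar>l\<bar>)"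
  proof cases
    case 1
    then show ?thesis
      using \<open>k < l\<close> strict_mono_onD[OF mono k(1) l(1)] by simp
  next
    case 2
    then show ?thesis
      using pos[OF k(1)] pos[OF l(1)] by simp
  next
    case 3
    then show ?thesis
      using \<open>k < l\<close> strict_mono_onD[OF mono l(1) k(1)] by simp
  qed
qed

lemma monotone_paths_altdef:
  "monotone_paths n a = {vs. vs \<noteq> [] \<and> set vs \<subseteq> cross_vertices n \<and>
    hd vs = - unit_vec n \<and> last vs = unit_vec n \<and>
    successively (\<lambda>u v. u \<noteq> - v \<and> lin_fun n a u < lin_fun n a v) vs}"
  unfolding monotone_paths_def all_nth_pred_iff_successively[symmetric] ..

lemma map_signed_unit_vec_in_monotone_paths_iff:
  assumes mono: "strict_mono_on {1..n} a" and pos: "\<And>i. i \<in> {1..n} \<Longrightarrow> 0 < a i"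
    and "1 \<le> n" and xs: "set xs \<subseteq> nonzero_range n"
  shows "map signed_unit_vec xs \<in> monotone_paths n a \<longleftrightarrow> xs \<in> signed_paths n"
proof -
  have sv_eq_iff: "signed_unit_vec k = signed_unit_vec l \<longleftrightarrow> k = l"
    if "k \<in> nonzero_range n" "l \<in> nonzero_range n" for k l
    using that inj_on_eq_iff[OF inj_on_signed_unit_vec] by (auto simp: nonzero_range_def)
  have edge: "signed_unit_vec k \<noteq> - signed_unit_vec l \<and>
      lin_fun n a (signed_unit_vec k) < lin_fun n a (signed_unit_vec l) \<longleftrightarrow> k < l \<and> k \<noteq> - l"
    if k: "k \<in> nonzero_range n" and l: "l \<in> nonzero_range n" for k l
  proof -
    have "- l \<in> nonzero_range n" "l \<noteq> 0"
      using l by (auto simp: nonzero_range_def)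
    then have "signed_unit_vec k \<noteq> - signed_unit_vec l \<longleftrightarrow> k \<noteq> - l"
      using sv_eq_iff[OF k] by (simp flip: signed_unit_vec_uminus)
    moreover have "lin_fun n a (signed_unit_vec k) < lin_fun n a (signed_unit_vec l) \<longleftrightarrow> k < l"
      using strict_mono_on_less[OF strict_mono_on_signed_weight[OF mono pos] k l]
      by (simp add: lin_fun_signed_unit_vec k l)
    ultimately show ?thesis
      by blast
  qed
  have "successively (\<lambda>u v. u \<noteq> - v \<and> lin_fun n a u < lin_fun n a v) (map signed_unit_vec xs)
      \<longleftrightarrow> successively (\<lambda>k l. k < l \<and> k \<noteq> - l) xs"
    unfolding successively_map using xs edge by (intro successively_cong) auto
  moreover have "set (map signed_unit_vec xs) \<subseteq> cross_vertices n"
    using xs by (auto simp: cross_vertices_eq_image)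
  moreover have "hd (map signed_unit_vec xs) = - unit_vec n \<longleftrightarrow> hd xs = - int n"
    and "last (map signed_unit_vec xs) = unit_vec n \<longleftrightarrow> last xs = int n"
    if "xs \<noteq> []"
  proof -
    have "hd xs \<in> nonzero_range n" "last xs \<in> nonzero_range n"
      using xs that by auto
    moreover have "- unit_vec n = signed_unit_vec (- int n)" "unit_vec n = signed_unit_vec (int n)"
      "int n \<in> nonzero_range n" "- int n \<in> nonzero_range n"
      using \<open>1 \<le> n\<close> by (auto simp: signed_unit_vec_def nonzero_range_def)
    ultimately show "hd (map signed_unit_vec xs) = - unit_vec n \<longleftrightarrow> hd xs = - int n"
      and "last (map signed_unit_vec xs) = unit_vec n \<longleftrightarrow> last xs = int n"
      using that sv_eq_iff by (simp_all add: hd_map last_map)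
  qed
  ultimately show ?thesis
    using xs by (auto simp: monotone_paths_altdef signed_paths_def signed_chains_def)
qed

lemma monotone_paths_eq_image:
  assumes "strict_mono_on {1..n} a" "\<And>i. i \<in> {1..n} \<Longrightarrow> 0 < a i" "1 \<le> n"
  shows "monotone_paths n a = map signed_unit_vec ` signed_paths n"
proof (intro equalityI subsetI)
  fix vs assume vs: "vs \<in> monotone_paths n a"
  then have "vs \<in> lists (signed_unit_vec ` nonzero_range n)"
    by (auto simp: monotone_paths_def cross_vertices_eq_image)
  then obtain xs where "set xs \<subseteq> nonzero_range n" "vs = map signed_unit_vec xs"
    by (auto simp: lists_image)
  then show "vs \<in> map signed_unit_vec ` signed_paths n"
    using vs map_signed_unit_vec_in_monotone_paths_iff[OF assms] by blast
next
  fix vs assume "vs \<in> map signed_unit_vec ` signed_paths n"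
  then obtain xs where "xs \<in> signed_paths n" "vs = map signed_unit_vec xs"
    by blast
  moreover have "set xs \<subseteq> nonzero_range n"
    using calculation(1) by (simp add: signed_paths_def signed_chains_def)
  ultimately show "vs \<in> monotone_paths n a"
    using map_signed_unit_vec_in_monotone_paths_iff[OF assms] by blast
qed

lemma card_monotone_paths:
  assumes "strict_mono_on {1..n} a" "\<And>i. i \<in> {1..n} \<Longrightarrow> 0 < a i" "1 \<le> n"
  shows "card (monotone_paths n a) = card (signed_paths n)"
proof -
  have "inj_on (map signed_unit_vec) (signed_paths n)"
    by (rule inj_on_mapI, rule inj_on_subset[OF inj_on_signed_unit_vec])
      (auto simp: signed_paths_def signed_chains_def nonzero_range_def)
  moreover have "monotone_paths n a = map signed_unit_vec ` signed_paths n"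
    using assms by (rule monotone_paths_eq_image)
  ultimately show ?thesis
    by (simp add: card_image)
qed

theorem theorem1p1:
  fixes n :: nat and a :: "nat \<Rightarrow> real"
  assumes "n \<ge> 2"
    and "0 < a 1"
    and "\<And>i j. 1 \<le> i \<Longrightarrow> i < j \<Longrightarrow> j \<le> n \<Longrightarrow> a i < a j"
  shows "real (card (monotone_paths n a)) = (2 ^ (2 * n - 1) - 2) / 3"
proof -
  obtain m where n: "n = Suc m"
    using assms(1) by (cases n) auto
  have mono: "strict_mono_on {1..n} a"
    using assms(3) by (auto intro: strict_mono_onI)
  have pos: "0 < a i" if "i \<in> {1..n}" for i
    using that assms(2) assms(3)[of 1 i] by (cases "i = 1") auto
  have "card (monotone_paths n a) = card (signed_chains m) - 1"
    using card_monotone_paths[OF mono pos] card_signed_paths_Suc n by simp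
  moreover have "3 * card (signed_chains m) = 2 ^ (2 * m + 1) + 1"
    by (rule card_signed_chains)
  ultimately have "3 * card (monotone_paths n a) + 2 = 2 ^ (2 * n - 1)"
    using n by simp
  then have "3 * real (card (monotone_paths n a)) + 2 = 2 ^ (2 * n - 1)"
    by (metis (mono_tags) of_nat_add of_nat_mult of_nat_numeral of_nat_power)
  then show ?thesis
    by simp
qed

end
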